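(* Let $\tau_i\in\tau_H$ be a HI-task in the multi-rate fluid model with earliest completion window $k_i$. If $$\sum_{j:1\le j<k_i}\theta_{i,j}^H w_j\ \ge\ u_i^H\sum_{j:1\le j<k_i}w_j,\qquad \forall j:1\le j<k_i,\ \theta_{i,j}^H\le\theta_{i,j+1}^H,$$ $$\forall j:k_i\le j\le n_H,\ \theta_{i,j}^H\ge u_i^H,\qquad\text{and}\qquad \theta_i^H\ge u_i^H,$$ then every early transition job of $\tau_i$ meets its deadline in the HI-mode (receives $C_i^H$ units of execution by its deadline).
   Context: A dual-criticality implicit-deadline sporadic task system runs on $m$ identical processors. Each task $\tau_i$ has period and relative deadline $T_i>0$, criticality in $\{LO,HI\}$, and WCETs $C_i^L\le C_i^H$; $u_i^L=C_i^L/T_i\le1$, $u_i^H=C_i^H/T_i\le1$; $n_H$ is the number of HI-tasks. The system starts in LO-mode; the mode switch is the first instant a HI-task job $\tau_i$ has executed $C_i^L$ units without completing; afterwards (HI-mode) LO-task jobs are dropped and HI jobs need up to $C_i^H$ units by their deadlines. Multi-rate fluid model (rate $\theta$ = receiving $\theta\ell$ units of execution in any interval of length $\ell$): in LO-mode each job of $\tau_i$ executes at rate $\theta_i^L\in(0,1]$; with time measured from the mode switch, the transition period $[0,\sum_{j=1}^{n_H}w_j)$ is divided into consecutive windows of durations $w_1,\dots,w_{n_H}\ge0$, window $j$ being $[\sum_{l<j}w_l,\sum_{l\le j}w_l)$, in which each job of HI-task $\tau_i$ executes at rate $\theta_{i,j}^H\in[0,1]$; after the transition period at rate $\theta_i^H\in(0,1]$.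 By convention $\theta_{i,n_H+1}^H$ denotes $\theta_i^H$. The earliest completion window of $\tau_i$ is the largest index $k_i\in\{1,\dots,n_H+1\}$ with $\sum_{j:1\le j<k_i}w_j<T_i-C_i^L/\theta_i^L$. An early transition job of $\tau_i$ is a job of $\tau_i$ released after the mode switch at a time $t<\sum_{j:1\le j<k_i}w_j$ (relative to the mode switch). *)

theory Defs
  imports Complex_Main
begin

text \<open>Time is measured from the mode switch. Windows are indexed 1..nH with
  durations w j; window j is the interval [win_start w j, win_start w (j+1)).\<close>

definition win_start :: "(nat \<Rightarrow> real) \<Rightarrow> nat \<Rightarrow> real" where
  "win_start w j = (\<Sum>l\<in>{1..<j}. w l)"

definition overlap :: "real \<Rightarrow> real \<Rightarrow> real \<Rightarrow> real \<Rightarrow> real" where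
  "overlap a b c d = max 0 (min b d - max a c)"

text \<open>Execution received (multi-rate fluid model, HI-mode) by a job of the HI-task
  in the interval [a,b) (times relative to the mode switch, a \<ge> 0): rate theta j in
  window j (1 \<le> j \<le> nH), rate thetaH after the transition period.\<close>
definition exec_HI :: "nat \<Rightarrow> (nat \<Rightarrow> real) \<Rightarrow> (nat \<Rightarrow> real) \<Rightarrow> real \<Rightarrow> real \<Rightarrow> real \<Rightarrow> real" where
  "exec_HI nH w theta thetaH a b =
     (\<Sum>j\<in>{1..nH}. theta j * overlap a b (win_start w j) (win_start w (j+1)))
     + thetaH * max 0 (b - max a (win_start w (nH+1)))"

text \<open>Convention: theta_{i,nH+1} denotes theta_i^H.\<close>
definition theta_ext :: "nat \<Rightarrow> (nat \<Rightarrow> real) \<Rightarrow> real \<Rightarrow> nat \<Rightarrow> real" where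
  "theta_ext nH theta thetaH j = (if j = nH + 1 then thetaH else theta j)"

definition earliest_completion_window ::
  "nat \<Rightarrow> (nat \<Rightarrow> real) \<Rightarrow> real \<Rightarrow> real \<Rightarrow> real \<Rightarrow> nat \<Rightarrow> bool" where
  "earliest_completion_window nH w T CL thetaL k \<longleftrightarrow>
     k \<in> {1..nH+1} \<and> (\<Sum>j\<in>{1..<k}. w j) < T - CL / thetaL \<and>
     (\<forall>k'\<in>{1..nH+1}. (\<Sum>j\<in>{1..<k'}. w j) < T - CL / thetaL \<longrightarrow> k' \<le> k)"

end

theory Submission imports Defs begin

text \<open>A job released at time \<open>t\<close> before the start of window \<open>k\<close> has the scheduling
  window \<open>[t, t + T)\<close>; as window \<open>k\<close> starts before \<open>T\<close>, this contains the windows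
  \<open>k, \<dots>, nH\<close> and everything after the transition period up to \<open>t + T\<close>, where every rate
  is at least \<open>u = CH / T\<close>. Of the windows \<open>1, \<dots>, k - 1\<close> the job sees only the parts
  after \<open>t\<close>: a suffix of the early transition period. Since the rates are nondecreasing
  there, the average rate over that suffix is at least the average over all early
  windows, which is at least \<open>u\<close>. Hence the job receives at least \<open>u T = CH\<close>.\<close>

lemma weighted_sum_ge_of_threshold:
  fixes th x w :: "'a \<Rightarrow> real"
  assumes bounds: "\<forall>j\<in>A. 0 \<le> x j \<and> x j \<le> w j"
    and avg: "u * (\<Sum>j\<in>A. w j) \<le> (\<Sum>j\<in>A. th j * w j)"
    and above: "\<forall>j\<in>A. 0 < x j \<longrightarrow> c \<le> th j"
    and below: "\<forall>j\<in>A. x j < w j \<longrightarrow> th j \<le> c"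
  shows "u * (\<Sum>j\<in>A. x j) \<le> (\<Sum>j\<in>A. th j * x j)"
  \<comment> \<open>If \<open>u \<le> c\<close>, all of \<open>x\<close> sits where \<open>th \<ge> u\<close>; otherwise the removed mass \<open>w - x\<close>
    sits where \<open>th < u\<close>, so removing it cannot push the average below \<open>u\<close>.\<close>
proof (cases "u \<le> c")
  case True
  have "u * x j \<le> th j * x j" if "j \<in> A" for j
  proof (cases "0 < x j")
    case True
    then show ?thesis using that above \<open>u \<le> c\<close> by (intro mult_right_mono) auto
  next
    case False
    then show ?thesis using that bounds by force
  qed
  then show ?thesis by (simp add: sum_distrib_left sum_mono)
next
  case False
  have "th j * (w j - x j) \<le> u * (w j - x j)" if "j \<in> A" for j
  proof (cases "x j < w j")
    case True
    then show ?thesis using that below False by (intro mult_right_mono) auto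
  next
    case False
    then show ?thesis using that bounds by force
  qed
  then have "(\<Sum>j\<in>A. th j * (w j - x j)) \<le> u * (\<Sum>j\<in>A. w j - x j)"
    by (simp add: sum_distrib_left sum_mono)
  then show ?thesis using avg by (simp add: sum_subtractf right_diff_distrib)
qed

lemma weighted_sum_ge_of_ordered:
  fixes th x w :: "'a \<Rightarrow> real"
  assumes "finite A"
    and bounds: "\<forall>j\<in>A. 0 \<le> x j \<and> x j \<le> w j"
    and avg: "u * (\<Sum>j\<in>A. w j) \<le> (\<Sum>j\<in>A. th j * w j)"
    and ordered: "\<forall>i\<in>A. \<forall>j\<in>A. x i < w i \<longrightarrow> 0 < x j \<longrightarrow> th i \<le> th j"
  shows "u * (\<Sum>j\<in>A. x j) \<le> (\<Sum>j\<in>A. th j * x j)"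
proof -
  define P where "P = {j\<in>A. 0 < x j}"
  obtain c where "\<forall>j\<in>A. 0 < x j \<longrightarrow> c \<le> th j" "\<forall>j\<in>A. x j < w j \<longrightarrow> th j \<le> c"
  proof (cases "P = {}")
    case True
    show thesis
      by (rule that[of "Max (th ` A)"]) (use True \<open>finite A\<close> in \<open>auto simp: P_def\<close>)
  next
    case False
    show thesis
      by (rule that[of "Min (th ` P)"]) (use False ordered \<open>finite A\<close> in \<open>auto simp: P_def\<close>)
  qed
  then show ?thesis using weighted_sum_ge_of_threshold bounds avg by blast
qed

lemma win_start_Suc: "win_start w (Suc j) = win_start w j + (if 1 \<le> j then w j else 0)"
  unfolding win_start_def by (cases "j = 0") (auto simp: sum.atLeastLessThan_Suc)

lemma win_start_mono:
  assumes "\<forall>l\<in>{1..<j}. 0 \<le> w l" and "i \<le> j"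
  shows "win_start w i \<le> win_start w j"
  unfolding win_start_def by (rule sum_mono2) (use assms in auto)

definition time_in_window :: "(nat \<Rightarrow> real) \<Rightarrow> real \<Rightarrow> real \<Rightarrow> nat \<Rightarrow> real" where
  "time_in_window w a b j = overlap a b (win_start w j) (win_start w (j + 1))"

lemma time_in_window_nonneg: "0 \<le> time_in_window w a b j"
  by (simp add: time_in_window_def overlap_def)

lemma time_in_windows_partition:
  assumes "\<forall>j\<in>{1..n}. 0 \<le> w j" and "0 \<le> a" and "a \<le> b"
  shows "(\<Sum>j\<in>{1..n}. time_in_window w a b j) + max 0 (b - max a (win_start w (n + 1))) = b - a"
  using assms(1)
proof (induction n)
  case 0
  then show ?case using assms(2,3) by (simp add: win_start_def)
next
  case (Suc n)
  have "win_start w (Suc n) \<le> win_start w (Suc n + 1)"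
    using Suc.prems by (simp add: win_start_Suc)
  then have "time_in_window w a b (Suc n) + max 0 (b - max a (win_start w (Suc n + 1)))
      = max 0 (b - max a (win_start w (n + 1)))"
    by (auto simp: time_in_window_def overlap_def max_def min_def)
  then show ?case using Suc by (simp add: algebra_simps)
qed

lemma exec_HI_ge:
  assumes w_nonneg: "\<forall>j\<in>{1..nH}. 0 \<le> w j" and "0 \<le> a" "a \<le> b"
    and k: "1 \<le> k" "k \<le> nH + 1"
    and early: "u * (\<Sum>j\<in>{1..<k}. time_in_window w a b j)
                  \<le> (\<Sum>j\<in>{1..<k}. theta j * time_in_window w a b j)"
    and late: "\<forall>j\<in>{k..nH}. u \<le> theta j" and after: "u \<le> thetaH"
  shows "u * (b - a) \<le> exec_HI nH w theta thetaH a b"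
proof -
  let ?O = "time_in_window w a b"
  let ?R = "max 0 (b - max a (win_start w (nH + 1)))"
  have split: "sum f {1..nH} = sum f {1..<k} + sum f {k..nH}" for f :: "nat \<Rightarrow> real"
    using sum.atLeastLessThan_concat[of 1 k "Suc nH" f] k by (simp add: atLeastLessThanSuc_atLeastAtMost)
  have "b - a = (\<Sum>j\<in>{1..<k}. ?O j) + (\<Sum>j\<in>{k..nH}. ?O j) + ?R"
    using time_in_windows_partition[OF assms(1-3)] split[of ?O] by linarith
  then have "u * (b - a) = u * (\<Sum>j\<in>{1..<k}. ?O j) + u * (\<Sum>j\<in>{k..nH}. ?O j) + u * ?R"
    by (simp add: distrib_left)
  also have "\<dots> \<le> (\<Sum>j\<in>{1..<k}. theta j * ?O j) + (\<Sum>j\<in>{k..nH}. theta j * ?O j) + thetaH * ?R"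
  proof (intro add_mono early)
    show "u * (\<Sum>j\<in>{k..nH}. ?O j) \<le> (\<Sum>j\<in>{k..nH}. theta j * ?O j)"
      unfolding sum_distrib_left using late
      by (intro sum_mono mult_right_mono time_in_window_nonneg) auto
    show "u * ?R \<le> thetaH * ?R" using after by (simp add: mult_right_mono)
  qed
  also have "\<dots> = exec_HI nH w theta thetaH a b"
    by (simp only: exec_HI_def time_in_window_def[symmetric] split[of "\<lambda>j. theta j * ?O j"])
  finally show ?thesis .
qed

lemma early_windows_weighted_sum_ge:
  assumes w_nonneg: "\<forall>j\<in>{1..<k}. 0 \<le> w j"
    and mono: "mono_on {1..<k} theta"
    and avg: "u * (\<Sum>j\<in>{1..<k}. w j) \<le> (\<Sum>j\<in>{1..<k}. theta j * w j)"
    and b: "win_start w k \<le> b"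
  shows "u * (\<Sum>j\<in>{1..<k}. time_in_window w a b j)
           \<le> (\<Sum>j\<in>{1..<k}. theta j * time_in_window w a b j)"
proof (rule weighted_sum_ge_of_ordered[OF _ _ avg])
  let ?S = "win_start w"
  have window: "?S (j + 1) = ?S j + w j" "?S (j + 1) \<le> b" "0 \<le> w j" if "j \<in> {1..<k}" for j
    using that w_nonneg win_start_mono[of k w "j + 1"] b by (auto simp: win_start_Suc)
  then have time_eq: "time_in_window w a b j = max 0 (?S (j + 1) - max a (?S j))"
    if "j \<in> {1..<k}" for j
    using that window(2) by (simp add: time_in_window_def overlap_def min_absorb2)
  show "\<forall>j\<in>{1..<k}. 0 \<le> time_in_window w a b j \<and> time_in_window w a b j \<le> w j"
    using window time_eq by (auto simp: max_def)
  show "\<forall>i\<in>{1..<k}. \<forall>j\<in>{1..<k}. time_in_window w a b i < w i \<longrightarrow>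
          0 < time_in_window w a b j \<longrightarrow> theta i \<le> theta j"
  proof (intro ballI impI)
    fix i j assume ij: "i \<in> {1..<k}" "j \<in> {1..<k}"
      and "time_in_window w a b i < w i" "0 < time_in_window w a b j"
    then have "?S i < a" "a < ?S (j + 1)"
      using window time_eq by (auto simp: max_def split: if_splits)
    moreover have "?S (j + 1) \<le> ?S i" if "j + 1 \<le> i"
      using that ij w_nonneg by (intro win_start_mono) auto
    ultimately have "i \<le> j" by linarith
    then show "theta i \<le> theta j" using mono ij by (simp add: mono_onD)
  qed
qed simp

lemma mono_on_of_theta_ext_steps:
  assumes "k \<le> nH + 1"
    and steps: "\<forall>j. 1 \<le> j \<and> j < k \<longrightarrow> theta_ext nH theta thetaH j \<le> theta_ext nH theta thetaH (j + 1)"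
  shows "mono_on {1..<k} theta"
proof (rule mono_onI)
  have step: "theta n \<le> theta (Suc n)" if "n \<in> {1..<k - 1}" for n
  proof -
    have "1 \<le> n" "n < k" "n + 1 < k" using that by auto
    then have "theta_ext nH theta thetaH n \<le> theta_ext nH theta thetaH (n + 1)"
      using steps by blast
    moreover have "theta_ext nH theta thetaH n = theta n"
      and "theta_ext nH theta thetaH (n + 1) = theta (n + 1)"
      using \<open>n + 1 < k\<close> assms(1) by (auto simp: theta_ext_def)
    ultimately show ?thesis by simp
  qed
  fix i j assume ij: "i \<in> {1..<k}" "j \<in> {1..<k}" "i \<le> j"
  show "theta i \<le> theta j"
    by (rule lift_Suc_mono_le_ivl[where N = "{1..<k - 1}"]) (use step ij in auto)
qed

theorem theorem2:
  fixes nH :: nat and w theta :: "nat \<Rightarrow> real"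
    and T CL CH thetaL thetaH :: real and k :: nat
  assumes T_pos: "T > 0"
    and CL_nonneg: "0 \<le> CL" and CL_le_CH: "CL \<le> CH"
    and uL_le1: "CL / T \<le> 1" and uH_le1: "CH / T \<le> 1"
    and thetaL: "0 < thetaL" "thetaL \<le> 1"
    and thetaH: "0 < thetaH" "thetaH \<le> 1"
    and theta_rng: "\<forall>j\<in>{1..nH}. 0 \<le> theta j \<and> theta j \<le> 1"
    and w_nonneg: "\<forall>j\<in>{1..nH}. 0 \<le> w j"
    and ecw: "earliest_completion_window nH w T CL thetaL k"
    and c1: "(\<Sum>j\<in>{1..<k}. theta j * w j) \<ge> (CH / T) * (\<Sum>j\<in>{1..<k}. w j)"
    and c2: "\<forall>j. 1 \<le> j \<and> j < k \<longrightarrow> theta_ext nH theta thetaH j \<le> theta_ext nH theta thetaH (j+1)"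
    and c3: "\<forall>j. k \<le> j \<and> j \<le> nH \<longrightarrow> theta j \<ge> CH / T"
    and c4: "thetaH \<ge> CH / T"
  shows "\<forall>t. 0 \<le> t \<and> t < (\<Sum>j\<in>{1..<k}. w j) \<longrightarrow>
           exec_HI nH w theta thetaH t (t + T) \<ge> CH"
proof (intro allI impI)
  fix t assume t: "0 \<le> t \<and> t < (\<Sum>j\<in>{1..<k}. w j)"
  have k: "1 \<le> k" "k \<le> nH + 1" and Sk: "win_start w k < T - CL / thetaL"
    using ecw unfolding earliest_completion_window_def win_start_def by auto
  have "0 \<le> CL / thetaL" using CL_nonneg thetaL by simp
  then have window_k: "win_start w k \<le> t + T" using Sk t by linarith
  have "mono_on {1..<k} theta" using mono_on_of_theta_ext_steps k(2) c2 by blast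
  moreover have "\<forall>j\<in>{1..<k}. 0 \<le> w j" using w_nonneg k by auto
  ultimately have early: "CH / T * (\<Sum>j\<in>{1..<k}. time_in_window w t (t + T) j)
      \<le> (\<Sum>j\<in>{1..<k}. theta j * time_in_window w t (t + T) j)"
    using early_windows_weighted_sum_ge c1 window_k by blast
  have "\<forall>j\<in>{k..nH}. CH / T \<le> theta j" using c3 by auto
  then have "CH / T * (t + T - t) \<le> exec_HI nH w theta thetaH t (t + T)"
    using exec_HI_ge[OF w_nonneg _ _ k early] c4 t T_pos by simp
  then show "exec_HI nH w theta thetaH t (t + T) \<ge> CH" using T_pos by simp
qed

end
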